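(* For a topologically reasonable pointclass $\Gamma$, if every set in $\Gamma$ is strongly $u$-regular, then every set in $\Gamma$ is $\ell$-regular.
   Context: A set $A\subseteq\omega^\omega$ is dominating if for every $g\in\omega^\omega$ there is $x\in A$ with $g(n)\le x(n)$ for all but finitely many $n$. $A$ is strongly dominating if for every $f\in\omega^\omega$ there is $x\in A$ with $f(x(k-1))<x(k)$ for all but finitely many $k$. A Laver tree is a tree $L\subseteq\omega^{<\omega}$ all of whose nodes extending the stem have infinitely many immediate successors. $A$ is $\ell$-regular if either $A$ contains $[L]$ for some Laver tree $L$, or $A$ is not strongly dominating. A nice set: let $\bar W=\langle w_\sigma,s_\sigma:\sigma\in\omega^{<\omega}\rangle$ be such that $\mathrm{dom}(s_{\langle\rangle})$ and each $w_\sigma$ are finite subsets of $\omega$; $s_{\langle\rangle}:\mathrm{dom}(s_{\langle\rangle})\to\omega$ and for $\sigma\neq\langle\rangle$, $s_\sigma:w_{\sigma{\restriction}(|\sigma|-1)}\to\omega$; for every $f\in\omega^\omega$, $\omega=\mathrm{dom}(s_{\langle\rangle})\cup\bigcup_n w_{f{\restriction}n}$ with the union pairwise disjoint; and $s_\sigma(i)>\sigma(|\sigma|-1)$ for all $\sigma\ne\langle\rangle$ and $i\in w_{\sigma{\restriction}(|\sigma|-1)}$. Then $C(\bar W)=\{\bigcup_n s_{f{\restriction}n}: f\in\omega^\omega\}$ is called a nice set. $A$ is strongly $u$-regular if either $A$ contains a nice set or $A$ is not dominating. A pointclass $\Gamma$ is topologically reasonable if it is closed under continuous preimages and $A\cap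 Q\in\Gamma$ whenever $A\in\Gamma$ and $Q$ is closed. *)

theory Defs
  imports "HOL-Analysis.Analysis" "HOL-Library.Sublist"
begin

text \<open>Baire space: functions nat \<Rightarrow> nat with the product topology (library instance),
  nat carrying its discrete topology. Finite sequences are lists of naturals.\<close>

definition restr :: "(nat \<Rightarrow> nat) \<Rightarrow> nat \<Rightarrow> nat list" where
  "restr x n = map x [0..<n]"

definition dominating :: "(nat \<Rightarrow> nat) set \<Rightarrow> bool" where
  "dominating A \<longleftrightarrow> (\<forall>g. \<exists>x\<in>A. \<forall>\<^sub>F n in sequentially. g n \<le> x n)"

text \<open>f(x(k-1)) < x(k) for almost all k, written with k = Suc j.\<close>
definition strongly_dominating :: "(nat \<Rightarrow> nat) set \<Rightarrow> bool" where
  "strongly_dominating A \<longleftrightarrow>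
     (\<forall>f. \<exists>x\<in>A. \<forall>\<^sub>F k in sequentially. f (x k) < x (Suc k))"

definition laver_tree :: "nat list set \<Rightarrow> bool" where
  "laver_tree L \<longleftrightarrow>
     (\<forall>t\<in>L. \<forall>u. prefix u t \<longrightarrow> u \<in> L) \<and>
     (\<exists>s\<in>L. (\<forall>t\<in>L. prefix t s \<or> prefix s t) \<and>
            (\<forall>t\<in>L. prefix s t \<longrightarrow> infinite {n. t @ [n] \<in> L}))"

definition tree_body :: "nat list set \<Rightarrow> (nat \<Rightarrow> nat) set" where
  "tree_body L = {x. \<forall>n. restr x n \<in> L}"

definition ell_regular :: "(nat \<Rightarrow> nat) set \<Rightarrow> bool" where
  "ell_regular A \<longleftrightarrow> (\<exists>L. laver_tree L \<and> tree_body L \<subseteq> A) \<or> \<not> strongly_dominating A"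

text \<open>A system W = (w_\<sigma>, s_\<sigma>); s_\<sigma> is a finite partial function (map).\<close>
definition nice_system :: "(nat list \<Rightarrow> nat set) \<Rightarrow> (nat list \<Rightarrow> (nat \<rightharpoonup> nat)) \<Rightarrow> bool" where
  "nice_system w s \<longleftrightarrow>
     finite (dom (s [])) \<and>
     (\<forall>\<sigma>. finite (w \<sigma>)) \<and>
     (\<forall>\<sigma>. \<sigma> \<noteq> [] \<longrightarrow> dom (s \<sigma>) = w (butlast \<sigma>)) \<and>
     (\<forall>f. dom (s []) \<union> (\<Union>n. w (restr f n)) = UNIV \<and>
          (\<forall>n. dom (s []) \<inter> w (restr f n) = {}) \<and>
          (\<forall>n m. n \<noteq> m \<longrightarrow> w (restr f n) \<inter> w (restr f m) = {})) \<and>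
     (\<forall>\<sigma> i. \<sigma> \<noteq> [] \<longrightarrow> i \<in> w (butlast \<sigma>) \<longrightarrow> the (s \<sigma> i) > last \<sigma>)"

text \<open>C(W): the functions \<Union>n s_{f|n}, for f in Baire space.\<close>
definition nice_set :: "(nat list \<Rightarrow> (nat \<rightharpoonup> nat)) \<Rightarrow> (nat \<Rightarrow> nat) set" where
  "nice_set s = {x. \<exists>f. \<forall>n i. i \<in> dom (s (restr f n)) \<longrightarrow> s (restr f n) i = Some (x i)}"

definition strongly_u_regular :: "(nat \<Rightarrow> nat) set \<Rightarrow> bool" where
  "strongly_u_regular A \<longleftrightarrow> (\<exists>w s. nice_system w s \<and> nice_set s \<subseteq> A) \<or> \<not> dominating A"

definition topologically_reasonable :: "(nat \<Rightarrow> nat) set set \<Rightarrow> bool" where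
  "topologically_reasonable \<Gamma> \<longleftrightarrow>
     (\<forall>A\<in>\<Gamma>. \<forall>h::(nat \<Rightarrow> nat) \<Rightarrow> (nat \<Rightarrow> nat). continuous_on UNIV h \<longrightarrow> h -` A \<in> \<Gamma>) \<and>
     (\<forall>A\<in>\<Gamma>. \<forall>Q. closed Q \<longrightarrow> A \<inter> Q \<in> \<Gamma>)"

end

theory Submission
  imports Defs
begin

text \<open>The map skip_read reads y at the positions p_0 = 0, p_(k+1) = p_k + 1 + y p_k: after reading
  a value v it skips v entries. It is continuous, so preimages under it stay in \<Gamma>. If A is
  strongly dominating, its preimage is dominating: a fast-growing x in A spaces the read positions
  so sparsely that a y carrying x at these positions can dominate any given g everywhere else.
  Strong u-regularity then puts a nice set C(W) into the preimage, and it remains to find a Laver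
  tree whose body lies in skip_read ` C(W). A node t of the tree carries a finite approximation
  \<phi> of the index f of C(W) that fixes the values read so far and leaves the next read position
  undecided. Extending \<phi> by ever larger entries until that position is decided yields a value
  there above any prescribed m and above every position decided so far, so the next read position
  is undecided again. Hence every node has infinitely many successors, and since \<phi> is a
  function of t, a branch determines a single f.\<close>

definition slot :: "nat list \<Rightarrow> nat" where
  "slot t = length t + sum_list t"

fun read_pos :: "(nat \<Rightarrow> nat) \<Rightarrow> nat \<Rightarrow> nat" where
  "read_pos y 0 = 0"
| "read_pos y (Suc k) = read_pos y k + 1 + y (read_pos y k)"

definition skip_read :: "(nat \<Rightarrow> nat) \<Rightarrow> nat \<Rightarrow> nat" where
  "skip_read y k = y (read_pos y k)"

lemma slot_Nil [simp]: "slot [] = 0"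
  by (simp add: slot_def)

lemma slot_snoc [simp]: "slot (t @ [v]) = slot t + 1 + v"
  by (simp add: slot_def)

lemma restr_0 [simp]: "restr z 0 = []"
  by (simp add: restr_def)

lemma length_restr [simp]: "length (restr z n) = n"
  by (simp add: restr_def)

lemma restr_Suc: "restr z (Suc n) = restr z n @ [z n]"
  by (simp add: restr_def)

lemma take_restr [simp]: "take j (restr z n) = restr z (min j n)"
  by (simp add: restr_def take_map min_def)

lemma nth_restr [simp]: "j < n \<Longrightarrow> restr z n ! j = z j"
  by (simp add: restr_def)

lemma slot_restr_Suc [simp]: "slot (restr z (Suc k)) = slot (restr z k) + 1 + z k"
  by (simp add: restr_Suc)

lemma strict_mono_slot_restr: "strict_mono (\<lambda>k. slot (restr z k))"
  by (rule strict_monoI_Suc) simp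

lemma incseq_read_pos: "incseq (read_pos y)"
  by (rule incseq_SucI) simp

lemma read_pos_eq_slot: "read_pos y k = slot (restr (skip_read y) k)"
  by (induction k) (simp_all add: skip_read_def)

lemma skip_read_slot: "skip_read y k = y (slot (restr (skip_read y) k))"
  by (simp add: skip_read_def flip: read_pos_eq_slot)

lemma skip_read_eqI:
  assumes "\<And>k. y (slot (restr z k)) = z k"
  shows "skip_read y = z"
proof -
  have "read_pos y k = slot (restr z k)" for k
    by (induction k) (simp_all add: assms)
  then show ?thesis
    by (simp add: fun_eq_iff skip_read_def assms)
qed

lemma continuous_on_finitely_determined:
  fixes g :: "(nat \<Rightarrow> nat) \<Rightarrow> 'a::topological_space"
  assumes "\<And>y0. \<exists>N. \<forall>y. (\<forall>i\<le>N. y i = y0 i) \<longrightarrow> g y = g y0"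
  shows "continuous_on UNIV g"
  unfolding continuous_on_topological
proof (intro ballI allI impI)
  fix y0 :: "nat \<Rightarrow> nat" and B :: "'a set"
  assume "open B" "g y0 \<in> B"
  obtain N where N: "\<And>y. (\<forall>i\<le>N. y i = y0 i) \<Longrightarrow> g y = g y0"
    using assms by blast
  define C where "C = Pi\<^sub>E UNIV (\<lambda>i. if i \<le> N then {y0 i} else UNIV)"
  have "open C"
    unfolding C_def by (rule open_PiE) (auto simp: open_discrete)
  moreover have "\<And>y. y \<in> C \<longleftrightarrow> (\<forall>i\<le>N. y i = y0 i)"
    by (auto simp: C_def PiE_iff split: if_split_asm)
  ultimately show "\<exists>C. open C \<and> y0 \<in> C \<and> (\<forall>y\<in>UNIV. y \<in> C \<longrightarrow> g y \<in> B)"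
    using N \<open>g y0 \<in> B\<close> by metis
qed

lemma continuous_on_skip_read: "continuous_on UNIV skip_read"
proof (rule continuous_on_coordinatewise_then_product, rule continuous_on_finitely_determined)
  fix k and y0 :: "nat \<Rightarrow> nat"
  have "read_pos y j = read_pos y0 j"
    if "\<forall>i\<le>read_pos y0 k. y i = y0 i" "j \<le> k" for y j
    using that(2)
  proof (induction j)
    case (Suc j)
    then have "read_pos y0 j \<le> read_pos y0 k"
      using incseq_read_pos by (simp add: incseqD)
    with Suc show ?case
      using that(1) by simp
  qed simp
  then show "\<exists>N. \<forall>y. (\<forall>i\<le>N. y i = y0 i) \<longrightarrow> skip_read y k = skip_read y0 k"
    unfolding skip_read_def by (metis order_refl)
qed

lemma eventually_slot_restr_le:
  assumes "\<And>k. k \<ge> K \<Longrightarrow> 2 * x k < x (Suc k)"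
  shows "\<forall>\<^sub>F k in sequentially. slot (restr x (Suc k)) \<le> 3 * x k"
proof -
  define c where "c = Suc (slot (restr x K))"
  have slot_le: "slot (restr x (Suc k)) \<le> 2 * x k + c" if "K \<le> k" for k
    using that
  proof (induction k rule: dec_induct)
    case (step k)
    then show ?case using assms[of k] by simp
  qed (simp add: c_def)
  have x_ge: "k \<le> x k + K" if "K \<le> k" for k
    using that
  proof (induction k rule: dec_induct)
    case (step k)
    then show ?case using assms[of k] by simp
  qed simp
  have "slot (restr x (Suc k)) \<le> 3 * x k" if "K + c \<le> k" for k
    using slot_le[of k] x_ge[of k] that by simp
  then show ?thesis
    unfolding eventually_sequentially by blast
qed

lemma skip_read_preimage_above:
  assumes "\<forall>\<^sub>F k in sequentially. g (slot (restr x k)) \<le> x k"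
  obtains y where "skip_read y = x" and "\<forall>\<^sub>F i in sequentially. g i \<le> y i"
proof -
  obtain K where K: "\<And>k. K \<le> k \<Longrightarrow> g (slot (restr x k)) \<le> x k"
    using assms unfolding eventually_sequentially by blast
  define pos where "pos k = slot (restr x k)" for k
  have "strict_mono pos"
    unfolding pos_def by (rule strict_mono_slot_restr)
  then have "inj pos"
    by (rule strict_mono_imp_inj_on)
  define y where "y i = (if i \<in> range pos then x (inv pos i) else g i)" for i
  have "skip_read y = x"
    by (rule skip_read_eqI) (simp add: y_def pos_def[symmetric] \<open>inj pos\<close>)
  moreover have "g i \<le> y i" if "pos K \<le> i" for i
  proof (cases "i \<in> range pos")
    case True
    then obtain k where "i = pos k"
      by blast
    with that \<open>strict_mono pos\<close> have "K \<le> k"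
      by (simp add: strict_mono_less_eq)
    moreover have "y i = x k"
      using \<open>i = pos k\<close> \<open>inj pos\<close> by (simp add: y_def)
    ultimately show ?thesis
      using K \<open>i = pos k\<close> by (simp add: pos_def)
  qed (simp add: y_def)
  then have "\<forall>\<^sub>F i in sequentially. g i \<le> y i"
    by (rule eventually_sequentiallyI)
  ultimately show ?thesis
    by (rule that)
qed

lemma dominating_vimage_skip_read:
  assumes "strongly_dominating A"
  shows "dominating (skip_read -` A)"
  unfolding dominating_def
proof
  fix g :: "nat \<Rightarrow> nat"
  \<comment> \<open>The summand 2n + 1 makes x more than double, which keeps the read positions below 3 x k;
    the sum then lifts x above g at those positions.\<close>
  define f where "f n = (\<Sum>i\<le>3 * n. g i) + 2 * n + 1" for n
  obtain x where "x \<in> A" and "\<forall>\<^sub>F k in sequentially. f (x k) < x (Suc k)"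
    using assms unfolding strongly_dominating_def by blast
  then obtain K where K: "\<And>k. K \<le> k \<Longrightarrow> f (x k) < x (Suc k)"
    unfolding eventually_sequentially by blast
  have "\<forall>\<^sub>F k in sequentially. slot (restr x (Suc k)) \<le> 3 * x k"
    by (rule eventually_slot_restr_le[of K]) (use K in \<open>fastforce simp: f_def\<close>)
  then obtain K' where K': "\<And>k. K' \<le> k \<Longrightarrow> slot (restr x (Suc k)) \<le> 3 * x k"
    unfolding eventually_sequentially by blast
  have "g (slot (restr x (Suc k))) \<le> x (Suc k)" if "max K K' \<le> k" for k
  proof -
    have "g (slot (restr x (Suc k))) \<le> (\<Sum>i\<le>3 * x k. g i)"
      using K'[of k] that by (intro member_le_sum) auto
    also have "\<dots> < x (Suc k)"
      using K[of k] that by (simp add: f_def)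
    finally show ?thesis
      by simp
  qed
  then have "\<forall>\<^sub>F k in sequentially. g (slot (restr x (Suc k))) \<le> x (Suc k)"
    by (rule eventually_sequentiallyI)
  then have "\<forall>\<^sub>F k in sequentially. g (slot (restr x k)) \<le> x k"
    by (rule iffD1[OF eventually_sequentially_Suc])
  then obtain y where "skip_read y = x" and "\<forall>\<^sub>F i in sequentially. g i \<le> y i"
    by (rule skip_read_preimage_above)
  then show "\<exists>y\<in>skip_read -` A. \<forall>\<^sub>F i in sequentially. g i \<le> y i"
    using \<open>x \<in> A\<close> by auto
qed

lemma take_prefix_eq: "prefix xs ys \<Longrightarrow> n \<le> length xs \<Longrightarrow> take n ys = take n xs"
  by (auto simp: prefix_def)

definition chain_limit :: "(nat \<Rightarrow> nat list) \<Rightarrow> nat \<Rightarrow> nat" where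
  "chain_limit c j = c (Suc j) ! j"

lemma restr_chain_limit:
  assumes chain: "\<And>k. strict_prefix (c k) (c (Suc k))" and "n \<le> length (c k)"
  shows "restr (chain_limit c) n = take n (c k)"
proof -
  have mono: "prefix (c a) (c b)" if "a \<le> b" for a b
    using that by (rule transitive_stepwise_le) (auto intro: prefix_order.trans prefix_order.less_imp_le chain)
  have "k \<le> length (c k)" for k
    by (induction k) (auto intro: Suc_leI order.strict_trans1 prefix_length_less chain)
  then have "c (Suc j) ! j = c k ! j" if "j < length (c k)" for j
    using that mono[of "Suc j" "max k (Suc j)"] mono[of k "max k (Suc j)"]
    by (metis Suc_le_lessD max.cobounded1 max.cobounded2 prefix_def nth_append)
  then show ?thesis
    using assms(2) by (intro nth_equalityI) (auto simp: chain_limit_def restr_def)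
qed

locale nice_structure =
  fixes w :: "nat list \<Rightarrow> nat set" and s :: "nat list \<Rightarrow> (nat \<rightharpoonup> nat)"
  assumes nice: "nice_system w s"
begin

lemma dom_snoc: "dom (s (\<sigma> @ [c])) = w \<sigma>"
  using nice by (simp add: nice_system_def)

lemma finite_dom: "finite (dom (s \<sigma>))"
  using nice by (cases \<sigma> rule: rev_cases) (auto simp: nice_system_def dom_snoc)

lemma snoc_value_gt: "s (\<sigma> @ [c]) i = Some v \<Longrightarrow> c < v"
  using nice dom_snoc unfolding nice_system_def by (metis butlast_snoc domI last_snoc option.sel snoc_eq_iff_butlast)

lemma dom_restr_disjoint:
  assumes "i \<in> dom (s (restr f a))" "i \<in> dom (s (restr f b))"
  shows "a = b"
proof -
  have "dom (s []) \<inter> w (restr f n) = {}" "w (restr f n) \<inter> w (restr f m) = {} \<or> n = m" for n m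
    using nice unfolding nice_system_def by blast+
  then show ?thesis
    using assms by (cases a; cases b) (auto simp: restr_Suc dom_snoc, blast)
qed

definition nice_point :: "(nat \<Rightarrow> nat) \<Rightarrow> nat \<Rightarrow> nat" where
  "nice_point f i = the (s (restr f (LEAST n. i \<in> dom (s (restr f n)))) i)"

lemma nice_point_eq:
  assumes "s (restr f n) i = Some v"
  shows "nice_point f i = v"
proof -
  have "i \<in> dom (s (restr f n))"
    using assms by blast
  then have "(LEAST n. i \<in> dom (s (restr f n))) = n"
    by (metis (mono_tags, lifting) LeastI dom_restr_disjoint)
  then show ?thesis
    using assms by (simp add: nice_point_def)
qed

lemma nice_point_mem: "nice_point f \<in> nice_set s"
  unfolding nice_set_def using nice_point_eq by blast

definition decided :: "nat list \<Rightarrow> nat set" where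
  "decided \<phi> = (\<Union>n\<le>length \<phi>. dom (s (take n \<phi>)))"

definition assigns :: "nat list \<Rightarrow> nat \<Rightarrow> nat \<Rightarrow> bool" where
  "assigns \<phi> i v \<longleftrightarrow> (\<exists>n\<le>length \<phi>. s (take n \<phi>) i = Some v)"

definition admissible :: "nat list \<Rightarrow> nat list \<Rightarrow> bool" where
  "admissible t \<phi> \<longleftrightarrow> (\<forall>j<length t. assigns \<phi> (slot (take j t)) (t ! j)) \<and> slot t \<notin> decided \<phi>"

lemma decided_Nil: "decided [] = dom (s [])"
  by (simp add: decided_def)

lemma decided_snoc: "decided (\<psi> @ [c]) = decided \<psi> \<union> w \<psi>"
proof -
  have "decided (\<psi> @ [c]) = (\<Union>n\<le>length \<psi>. dom (s (take n (\<psi> @ [c])))) \<union> dom (s (\<psi> @ [c]))"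
    by (simp add: decided_def atMost_Suc Un_commute)
  also have "\<dots> = decided \<psi> \<union> w \<psi>"
    by (simp add: decided_def dom_snoc)
  finally show ?thesis .
qed

lemma finite_decided: "finite (decided \<phi>)"
  by (simp add: decided_def finite_dom)

lemma assigns_Nil: "assigns [] i v \<longleftrightarrow> s [] i = Some v"
  by (simp add: assigns_def)

lemma assigns_prefix: "assigns \<phi> i v \<Longrightarrow> prefix \<phi> \<phi>' \<Longrightarrow> assigns \<phi>' i v"
  unfolding assigns_def by (metis take_prefix_eq prefix_length_le order.trans)

text \<open>Extending \<psi> by an entry c \<ge> bound \<psi> makes every value newly assigned by s (\<psi> @ [c]) exceed
  all positions decided by \<psi> @ [c].\<close>

definition bound :: "nat list \<Rightarrow> nat" where
  "bound \<psi> = Suc (Max (insert 0 (decided \<psi> \<union> w \<psi>)))"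

lemma decided_snoc_less_bound: "i \<in> decided (\<psi> @ [c]) \<Longrightarrow> i < bound \<psi>"
  using nice by (simp add: decided_snoc bound_def le_imp_less_Suc finite_decided nice_system_def)

primrec greedy :: "nat list \<Rightarrow> nat \<Rightarrow> nat \<Rightarrow> nat list" where
  "greedy \<phi> m 0 = \<phi>"
| "greedy \<phi> m (Suc i) = greedy \<phi> m i @ [max m (bound (greedy \<phi> m i))]"

lemma length_greedy [simp]: "length (greedy \<phi> m i) = length \<phi> + i"
  by (induction i) simp_all

lemma prefix_greedy: "prefix \<phi> (greedy \<phi> m i)"
  by (induction i) (auto intro: prefix_order.trans)

lemma greedy_eventually_decides:
  assumes "p \<notin> dom (s [])"
  shows "\<exists>i. p \<in> decided (greedy \<phi> m i)"
proof -
  let ?f = "chain_limit (greedy \<phi> m)"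
  have "dom (s []) \<union> (\<Union>n. w (restr ?f n)) = UNIV"
    using nice by (simp add: nice_system_def)
  then obtain n where "p \<in> w (restr ?f n)"
    using assms by blast
  define L where "L = greedy \<phi> m (Suc n)"
  have "restr ?f n = take n L"
    unfolding L_def by (rule restr_chain_limit) (auto intro: strict_prefixI')
  moreover have "n < length L"
    by (simp add: L_def)
  ultimately have "p \<in> dom (s (take (Suc n) L))"
    using \<open>p \<in> w (restr ?f n)\<close> by (simp add: take_Suc_conv_app_nth dom_snoc)
  then show ?thesis
    unfolding decided_def L_def by (metis UN_I atMost_iff le_add2 length_greedy)
qed

definition extension :: "nat list \<Rightarrow> nat \<Rightarrow> nat \<Rightarrow> nat list" where
  "extension \<phi> p m = greedy \<phi> m (LEAST i. p \<in> decided (greedy \<phi> m i))"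

definition next_value :: "nat list \<Rightarrow> nat \<Rightarrow> nat \<Rightarrow> nat" where
  "next_value \<phi> p m = the (s (extension \<phi> p m) p)"

lemma extension_snoc:
  assumes "p \<notin> decided \<phi>"
  obtains \<psi> where "extension \<phi> p m = \<psi> @ [max m (bound \<psi>)]" "prefix \<phi> \<psi>" "p \<in> w \<psi>"
proof -
  define i where "i = (LEAST i. p \<in> decided (greedy \<phi> m i))"
  have "p \<notin> dom (s [])"
    using assms unfolding decided_def by (metis UN_I atMost_iff le0 take0)
  then have "p \<in> decided (greedy \<phi> m i)"
    unfolding i_def by (rule LeastI_ex[OF greedy_eventually_decides])
  moreover have "i \<noteq> 0"
    using \<open>p \<in> decided (greedy \<phi> m i)\<close> assms by (metis greedy.simps(1))
  then obtain i' where "i = Suc i'"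
    using not0_implies_Suc by blast
  moreover have "p \<notin> decided (greedy \<phi> m i')"
    using not_less_Least[of i' "\<lambda>i. p \<in> decided (greedy \<phi> m i)"] \<open>i = Suc i'\<close> i_def by simp
  ultimately show ?thesis
    using that[of "greedy \<phi> m i'"] by (simp add: extension_def i_def[symmetric] decided_snoc prefix_greedy)
qed

lemma strict_prefix_extension: "p \<notin> decided \<phi> \<Longrightarrow> strict_prefix \<phi> (extension \<phi> p m)"
  by (metis extension_snoc prefix_order.le_less_trans strict_prefixI')

lemma admissible_extension:
  assumes "admissible t \<phi>"
  shows "admissible (t @ [next_value \<phi> (slot t) m]) (extension \<phi> (slot t) m)"
    and "m < next_value \<phi> (slot t) m"
proof -
  have "slot t \<notin> decided \<phi>"
    using assms by (simp add: admissible_def)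
  then obtain \<psi> where ext: "extension \<phi> (slot t) m = \<psi> @ [max m (bound \<psi>)]"
    and "prefix \<phi> \<psi>" and "slot t \<in> w \<psi>"
    by (rule extension_snoc)
  define v where "v = next_value \<phi> (slot t) m"
  have v: "s (\<psi> @ [max m (bound \<psi>)]) (slot t) = Some v"
    using \<open>slot t \<in> w \<psi>\<close> by (auto simp: v_def next_value_def ext simp flip: dom_snoc[of _ "max m (bound \<psi>)"])
  then have "max m (bound \<psi>) < v"
    by (rule snoc_value_gt)
  then show "m < v"
    by simp
  have "slot (t @ [v]) \<notin> decided (\<psi> @ [max m (bound \<psi>)])"
    using decided_snoc_less_bound \<open>max m (bound \<psi>) < v\<close> by fastforce
  moreover have "assigns (\<psi> @ [max m (bound \<psi>)]) (slot (take j (t @ [v]))) ((t @ [v]) ! j)"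
    if "j < length (t @ [v])" for j
  proof (cases "j < length t")
    case True
    then show ?thesis
      using assms \<open>prefix \<phi> \<psi>\<close> by (auto simp: admissible_def nth_append intro: assigns_prefix)
  next
    case False
    then show ?thesis
      using that v by (auto simp: assigns_def less_Suc_eq intro!: exI[of _ "Suc (length \<psi>)"])
  qed
  ultimately show "admissible (t @ [v]) (extension \<phi> (slot t) m)"
    by (simp add: admissible_def ext)
qed

definition stem :: "nat list" where
  "stem = restr (skip_read (the \<circ> s [])) (LEAST k. slot (restr (skip_read (the \<circ> s [])) k) \<notin> dom (s []))"

lemma admissible_stem: "admissible stem []"
proof -
  define z where "z = skip_read (the \<circ> s [])"
  define pos where "pos k = slot (restr z k)" for k
  have "inj pos"
    unfolding pos_def by (rule strict_mono_imp_inj_on[OF strict_mono_slot_restr])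
  then have "finite (pos -` dom (s []))"
    by (rule finite_vimageI[OF finite_dom])
  then have "\<exists>k. k \<notin> pos -` dom (s [])"
    by (rule ex_new_if_finite[OF infinite_UNIV_nat])
  define k0 where "k0 = (LEAST k. pos k \<notin> dom (s []))"
  have "pos k0 \<notin> dom (s [])"
    unfolding k0_def by (rule LeastI_ex) (use \<open>\<exists>k. k \<notin> pos -` dom (s [])\<close> in simp)
  moreover have "s [] (pos j) = Some (z j)" if "j < k0" for j
  proof -
    have "z j = the (s [] (pos j))"
      unfolding pos_def z_def using skip_read_slot[of "the \<circ> s []" j] by simp
    moreover have "pos j \<in> dom (s [])"
      using not_less_Least[of j "\<lambda>k. pos k \<notin> dom (s [])"] that by (simp add: k0_def)
    ultimately show ?thesis
      by auto
  qed
  moreover have "stem = restr z k0"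
    by (simp add: stem_def z_def pos_def k0_def)
  ultimately show ?thesis
    by (simp add: admissible_def assigns_Nil decided_Nil pos_def min_def)
qed

text \<open>Taking the least suitable m makes \<phi> a function of t (reach_unique).\<close>

inductive reach :: "nat list \<Rightarrow> nat list \<Rightarrow> bool" where
  reach_stem: "reach stem []"
| reach_snoc: "reach t \<phi> \<Longrightarrow> v \<in> range (next_value \<phi> (slot t)) \<Longrightarrow>
    reach (t @ [v]) (extension \<phi> (slot t) (LEAST m. next_value \<phi> (slot t) m = v))"

lemma reach_admissible: "reach t \<phi> \<Longrightarrow> admissible t \<phi>"
proof (induction rule: reach.induct)
  case (reach_snoc t \<phi> v)
  then have "next_value \<phi> (slot t) (LEAST m. next_value \<phi> (slot t) m = v) = v"
    by (metis (mono_tags) LeastI rangeE)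
  then show ?case
    using admissible_extension(1)[OF reach_snoc.IH] by metis
qed (rule admissible_stem)

lemma prefix_stem_reach: "reach t \<phi> \<Longrightarrow> prefix stem t"
  by (induction rule: reach.induct) (auto intro: prefix_order.trans)

lemma length_stem_le_reach: "reach t \<phi> \<Longrightarrow> length stem \<le> length t"
  using prefix_stem_reach prefix_length_le by blast

lemma reach_unique: "reach t \<phi> \<Longrightarrow> reach t \<phi>' \<Longrightarrow> \<phi>' = \<phi>"
proof (induction arbitrary: \<phi>' rule: reach.induct)
  case reach_stem
  then show ?case
  proof cases
    case (reach_snoc t)
    then show ?thesis
      using length_stem_le_reach[of t] by (auto dest: arg_cong[where f = length])
  qed simp
next
  case (reach_snoc t \<phi> v)
  from reach_snoc.prems show ?case
  proof cases
    case reach_stem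
    then show ?thesis
      using length_stem_le_reach[OF reach_snoc.hyps(1)] by (auto dest: arg_cong[where f = length])
  next
    case (reach_snoc t' \<phi>'' v')
    then show ?thesis
      using reach_snoc.IH by auto
  qed
qed

lemma reach_snoc_strict_prefix:
  assumes "reach t \<phi>" "reach (t @ [v]) \<psi>"
  shows "strict_prefix \<phi> \<psi>"
  using assms(2)
proof cases
  case reach_stem
  then show ?thesis
    using length_stem_le_reach[OF assms(1)] by (auto dest: arg_cong[where f = length])
next
  case (reach_snoc t' \<phi>' v')
  then have "\<phi>' = \<phi>" and "slot t \<notin> decided \<phi>"
    using assms(1) reach_unique reach_admissible by (auto simp: admissible_def)
  then show ?thesis
    using reach_snoc by (auto intro: strict_prefix_extension)
qed

lemma reach_prefix:
  assumes "reach t \<phi>" "prefix stem u" "prefix u t"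
  shows "\<exists>\<psi>. reach u \<psi>"
  using assms
proof (induction rule: reach.induct)
  case reach_stem
  then show ?case
    using prefix_order.antisym reach.reach_stem by blast
next
  case (reach_snoc t \<phi> v)
  show ?case
  proof (cases "u = t @ [v]")
    case True
    then show ?thesis
      using reach.reach_snoc[OF reach_snoc.hyps] by blast
  next
    case False
    then show ?thesis
      using reach_snoc.IH reach_snoc.prems by simp
  qed
qed

definition laver :: "nat list set" where
  "laver = {u. \<exists>t \<phi>. reach t \<phi> \<and> prefix u t}"

lemma reach_of_laver: "u \<in> laver \<Longrightarrow> length stem \<le> length u \<Longrightarrow> \<exists>\<phi>. reach u \<phi>"
  unfolding laver_def by (blast intro: reach_prefix prefix_length_prefix prefix_stem_reach)

lemma laver_tree_laver: "laver_tree laver"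
  unfolding laver_tree_def
proof (intro conjI ballI allI impI bexI[of _ stem])
  show "stem \<in> laver"
    unfolding laver_def using reach_stem by blast
  show "u \<in> laver" if "t \<in> laver" "prefix u t" for t u
    using that unfolding laver_def by (blast intro: prefix_order.trans)
  show "prefix t stem \<or> prefix stem t" if "t \<in> laver" for t
    using that unfolding laver_def by (blast dest: prefix_stem_reach prefix_same_cases)
  show "infinite {n. t @ [n] \<in> laver}" if "t \<in> laver" "prefix stem t" for t
  proof -
    from that obtain \<phi> where "reach t \<phi>"
      using reach_of_laver prefix_length_le by blast
    then have "t @ [next_value \<phi> (slot t) m] \<in> laver" for m
      unfolding laver_def by (blast intro: reach_snoc)
    moreover have "m < next_value \<phi> (slot t) m" for m
      using admissible_extension(2) reach_admissible \<open>reach t \<phi>\<close> by blast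
    ultimately show ?thesis
      unfolding infinite_nat_iff_unbounded by blast
  qed
qed

lemma skip_read_nice_point_chain_limit:
  assumes chain: "\<And>k. strict_prefix (c k) (c (Suc k))"
    and "\<And>j. \<exists>k. assigns (c k) (slot (restr z j)) (z j)"
  shows "skip_read (nice_point (chain_limit c)) = z"
proof (rule skip_read_eqI)
  fix j
  obtain k n where "n \<le> length (c k)" "s (take n (c k)) (slot (restr z j)) = Some (z j)"
    using assms(2) unfolding assigns_def by blast
  then show "nice_point (chain_limit c) (slot (restr z j)) = z j"
    by (metis chain restr_chain_limit nice_point_eq)
qed

lemma tree_body_laver: "tree_body laver \<subseteq> skip_read ` nice_set s"
proof
  fix z
  assume "z \<in> tree_body laver"
  then have "restr z n \<in> laver" for n
    by (simp add: tree_body_def)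
  then have reachable: "\<exists>\<phi>. reach (restr z (length stem + k)) \<phi>" for k
    using reach_of_laver by simp
  define c where "c k = (THE \<phi>. reach (restr z (length stem + k)) \<phi>)" for k
  have reach_c: "reach (restr z (length stem + k)) (c k)" for k
    unfolding c_def by (rule theI') (use reachable reach_unique in blast)
  have "strict_prefix (c k) (c (Suc k))" for k
    using reach_snoc_strict_prefix reach_c[of k] reach_c[of "Suc k"] by (simp add: restr_Suc)
  moreover have "assigns (c (Suc j)) (slot (restr z j)) (z j)" for j
    using reach_admissible[OF reach_c[of "Suc j"]] by (simp add: admissible_def min_def)
  ultimately have "skip_read (nice_point (chain_limit c)) = z"
    by (blast intro: skip_read_nice_point_chain_limit)
  then show "z \<in> skip_read ` nice_set s"
    using nice_point_mem by blast
qed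

end

theorem proposition3p7:
  fixes \<Gamma> :: "(nat \<Rightarrow> nat) set set"
  assumes "topologically_reasonable \<Gamma>"
    and "\<forall>A\<in>\<Gamma>. strongly_u_regular A"
  shows "\<forall>A\<in>\<Gamma>. ell_regular A"
proof
  fix A
  assume "A \<in> \<Gamma>"
  show "ell_regular A"
  proof (cases "strongly_dominating A")
    case True
    have "skip_read -` A \<in> \<Gamma>"
      using assms(1) \<open>A \<in> \<Gamma>\<close> continuous_on_skip_read unfolding topologically_reasonable_def by blast
    moreover have "dominating (skip_read -` A)"
      using True by (rule dominating_vimage_skip_read)
    ultimately obtain w s where "nice_system w s" and "nice_set s \<subseteq> skip_read -` A"
      using assms(2) unfolding strongly_u_regular_def by blast
    then interpret nice_structure w s
      by unfold_locales
    have "tree_body laver \<subseteq> A"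
      using tree_body_laver \<open>nice_set s \<subseteq> skip_read -` A\<close> by blast
    then show ?thesis
      using laver_tree_laver unfolding ell_regular_def by blast
  qed (simp add: ell_regular_def)
qed

end
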